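(* Let $z\in\mathbb R^d$ satisfy $\|z\|_2=1$ and $\|z\|_\infty\le\mu/\sqrt d$, and let $M=zz^\top$. There are a polynomial $P$ and absolute constants $c_0,C>0$ such that if $0<\epsilon\le c_0$ and $p\ge P(\mu,\log d)/(d\epsilon^2)$ (with $p\le1$), then with probability $1-o(1)$ as $d\to\infty$ over $\Omega$, every local minimum $x$ of $f(x)=\frac12\|P_\Omega(M-xx^\top)\|_F^2$ that lies in $\mathcal B=\{x\in\mathbb R^d:\|x\|_\infty<2\mu/\sqrt d\}$ satisfies $\min(\|x-z\|_2,\|x+z\|_2)\le C\sqrt\epsilon$.
   Context: The random set $\Omega\subseteq[d]\times[d]$ is generated as follows: independently for each unordered pair $\{i,j\}$ (including $i=j$), with probability $p$ both $(i,j)$ and $(j,i)$ are placed in $\Omega$, otherwise neither. $P_\Omega(A)$ is the matrix agreeing with $A$ on entries in $\Omega$ and zero elsewhere; $\|\cdot\|_F$ is the Frobenius norm. *)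

theory Defs
  imports Complex_Main
begin

text \<open>Vectors in R^d are represented as functions nat \<Rightarrow> real; only the
  coordinates i < d are relevant (indices are 0-based: [d] = {0..<d}).\<close>

definition l2norm :: "nat \<Rightarrow> (nat \<Rightarrow> real) \<Rightarrow> real" where
  "l2norm d x = sqrt (\<Sum>i<d. (x i)\<^sup>2)"

definition is_poly2 :: "(real \<Rightarrow> real \<Rightarrow> real) \<Rightarrow> bool" where
  "is_poly2 P \<longleftrightarrow> (\<exists>n::nat. \<exists>c::nat \<Rightarrow> nat \<Rightarrow> real.
      \<forall>a b. P a b = (\<Sum>i\<le>n. \<Sum>j\<le>n. c i j * a ^ i * b ^ j))"

text \<open>Unordered pairs {i,j} (including i = j) of [d], represented as (i,j) with i \<le> j.\<close>
definition upairs :: "nat \<Rightarrow> (nat \<times> nat) set" where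
  "upairs d = {(i, j). i \<le> j \<and> j < d}"

definition symcl :: "(nat \<times> nat) set \<Rightarrow> (nat \<times> nat) set" where
  "symcl S = S \<union> {(j, i) | i j. (i, j) \<in> S}"

text \<open>Probability that the random set Omega satisfies E: each unordered pair is
  chosen independently with probability p, and Omega is the symmetric closure
  of the chosen pairs.\<close>
definition omega_prob :: "nat \<Rightarrow> real \<Rightarrow> ((nat \<times> nat) set \<Rightarrow> bool) \<Rightarrow> real" where
  "omega_prob d p E =
     (\<Sum>S\<in>Pow (upairs d). if E (symcl S)
        then p ^ card S * (1 - p) ^ card (upairs d - S) else 0)"

definition mc_obj :: "nat \<Rightarrow> (nat \<times> nat) set \<Rightarrow> (nat \<Rightarrow> real) \<Rightarrow> (nat \<Rightarrow> real) \<Rightarrow> real" where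
  "mc_obj d \<Omega> z x =
     (1/2) * (\<Sum>(i,j)\<in>\<Omega> \<inter> ({..<d} \<times> {..<d}). (z i * z j - x i * x j)\<^sup>2)"

definition local_min_d :: "nat \<Rightarrow> ((nat \<Rightarrow> real) \<Rightarrow> real) \<Rightarrow> (nat \<Rightarrow> real) \<Rightarrow> bool" where
  "local_min_d d g x \<longleftrightarrow>
     (\<exists>r>0. \<forall>y. l2norm d (\<lambda>i. x i - y i) < r \<longrightarrow> g x \<le> g y)"

end

theory Submission
  imports Defs "HOL-Real_Asymp.Real_Asymp"
begin

(* For a vector w whose entries are at most K/d in absolute value, the sampled quadratic form
   sum_{(i,j) in Omega} w_i w_j is a sum of independent bounded terms, one per unordered pair,
   with mean p (sum_i w_i)^2.  A Chernoff bound makes it eta p-close to its mean except with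
   probability 2 exp(-eta^2 p d^2 / (64 K^4)).  Rounding to a grid of (2N+1)^d points with
   N ~ K^2/eta extends this to all such w at once, and the lower bound on p makes the total
   failure probability at most 2 (2N+1)^d / d^d, which tends to 0.

   On this event let x be a local minimum in B and put alpha = <z,x>, s = |x|^2.  The first-order
   conditions in the directions x and z and the second-order condition in the direction z are
   linear combinations of sampled forms of entrywise products of x and z, so up to O(eta) they
   hold for the corresponding squared sums:
     |alpha^2 - s^2| <= 2 eta,   |alpha (1 - s)| <= eta,   s + 2 alpha^2 >= 1 - 4 eta.
   These force min(|x - z|, |x + z|)^2 = s + 1 - 2 |alpha| <= 20 eta; take eta = epsilon, C = 5. *)

section \<open>Chernoff bound for sums over a random subset\<close>

definition subset_prob :: "real \<Rightarrow> 'a set \<Rightarrow> 'a set \<Rightarrow> real" where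
  "subset_prob p U S = p ^ card S * (1 - p) ^ card (U - S)"

lemma subset_prob_nonneg: "0 \<le> p \<Longrightarrow> p \<le> 1 \<Longrightarrow> 0 \<le> subset_prob p U S"
  by (simp add: subset_prob_def)

lemma sum_subset_prob:
  assumes "finite U" shows "(\<Sum>S\<in>Pow U. subset_prob p U S) = 1"
proof -
  have "(\<Prod>e\<in>U. p + (1 - p)) = (\<Sum>S\<in>Pow U. (\<Prod>e\<in>S. p) * (\<Prod>e\<in>U - S. 1 - p))"
    by (rule prod_add[OF assms])
  then show ?thesis by (simp add: subset_prob_def)
qed

lemma exp_le_quadratic:
  fixes y :: real assumes "\<bar>y\<bar> \<le> 1" shows "exp y \<le> 1 + y + y\<^sup>2"
proof (cases "y \<ge> 0")
  case True
  then show ?thesis using exp_bound[of y] assms by auto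
next
  case False
  define u where "u = -y"
  have u: "0 < u" "u \<le> 1" using False assms by (auto simp: u_def)
  have "(1 + u/2) * (1 + u/2) \<le> exp (u/2) * exp (u/2)"
    using exp_ge_add_one_self[of "u/2"] u by (intro mult_mono) auto
  then have e: "(1 + u/2)\<^sup>2 \<le> exp u" by (simp add: exp_add[symmetric] power2_eq_square)
  have "0 < u\<^sup>2" using u by simp
  then have q: "0 < 1 - u + u\<^sup>2" using u by linarith
  have "(1 - u + u\<^sup>2) * (1 + u/2)\<^sup>2 = 1 + u\<^sup>2/4 + 3*u^3/4 + u^4/4"
    by (simp add: power2_eq_square power3_eq_cube power4_eq_xxxx field_simps)
  then have "1 \<le> (1 - u + u\<^sup>2) * (1 + u/2)\<^sup>2" using u by simp
  also have "\<dots> \<le> (1 - u + u\<^sup>2) * exp u" using e q by (intro mult_left_mono) auto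
  finally have "exp (-u) \<le> 1 - u + u\<^sup>2" using q by (simp add: exp_minus field_simps)
  then show ?thesis by (simp add: u_def)
qed

lemma centered_bernoulli_mgf_le:
  fixes p a :: real assumes p: "0 \<le> p" "p \<le> 1" and a: "\<bar>a\<bar> \<le> 1"
  shows "p * exp (a * (1 - p)) + (1 - p) * exp (- (a * p)) \<le> exp (a\<^sup>2 * p)"
proof -
  have a1: "\<bar>a * (1 - p)\<bar> \<le> 1" and a2: "\<bar>- (a * p)\<bar> \<le> 1"
    using p a by (simp_all add: abs_mult mult_le_one)
  have "p * exp (a * (1 - p)) + (1 - p) * exp (- (a * p))
      \<le> p * (1 + a * (1 - p) + (a * (1 - p))\<^sup>2) + (1 - p) * (1 + - (a * p) + (- (a * p))\<^sup>2)"
    using exp_le_quadratic[OF a1] exp_le_quadratic[OF a2] p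
    by (intro add_mono mult_left_mono) auto
  also have "\<dots> = 1 + a\<^sup>2 * p * (1 - p)" by (simp add: power2_eq_square algebra_simps)
  also have "\<dots> \<le> 1 + a\<^sup>2 * p" using p by (simp add: mult_left_le)
  also have "\<dots> \<le> exp (a\<^sup>2 * p)" by (rule exp_ge_add_one_self)
  finally show ?thesis .
qed

lemma subset_sum_mgf_le:
  fixes c :: "'a \<Rightarrow> real"
  assumes U: "finite U" and p: "0 \<le> p" "p \<le> 1" and c: "\<forall>e\<in>U. \<bar>l * c e\<bar> \<le> 1"
  shows "(\<Sum>S\<in>Pow U. subset_prob p U S * exp (l * ((\<Sum>e\<in>S. c e) - p * (\<Sum>e\<in>U. c e))))
         \<le> exp (l\<^sup>2 * p * (\<Sum>e\<in>U. (c e)\<^sup>2))"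
proof -
  define f1 where "f1 e = p * exp (l * c e * (1 - p))" for e
  define f2 where "f2 e = (1 - p) * exp (- (l * c e * p))" for e
  have factor: "subset_prob p U S * exp (l * ((\<Sum>e\<in>S. c e) - p * (\<Sum>e\<in>U. c e)))
      = (\<Prod>e\<in>S. f1 e) * (\<Prod>e\<in>U - S. f2 e)" if "S \<in> Pow U" for S
  proof -
    have SU: "S \<subseteq> U" and fS: "finite S" using that U by (auto intro: finite_subset)
    have "(\<Sum>e\<in>U. c e) = (\<Sum>e\<in>S. c e) + (\<Sum>e\<in>U - S. c e)"
      using sum.subset_diff[OF SU U] by (simp add: add.commute)
    then have "l * ((\<Sum>e\<in>S. c e) - p * (\<Sum>e\<in>U. c e))
        = (\<Sum>e\<in>S. l * c e * (1 - p)) + (\<Sum>e\<in>U - S. - (l * c e * p))"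
      by (simp add: sum_distrib_left sum_distrib_right sum_negf sum_subtractf algebra_simps)
    then show ?thesis
      by (simp add: f1_def f2_def subset_prob_def exp_add exp_sum fS U prod.distrib)
  qed
  have "(\<Sum>S\<in>Pow U. subset_prob p U S * exp (l * ((\<Sum>e\<in>S. c e) - p * (\<Sum>e\<in>U. c e))))
      = (\<Sum>S\<in>Pow U. (\<Prod>e\<in>S. f1 e) * (\<Prod>e\<in>U - S. f2 e))"
    using factor by (rule sum.cong[OF refl])
  also have "\<dots> = (\<Prod>e\<in>U. f1 e + f2 e)" by (rule prod_add[OF U, symmetric])
  also have "\<dots> \<le> (\<Prod>e\<in>U. exp ((l * c e)\<^sup>2 * p))"
  proof (intro prod_mono conjI)
    fix e assume "e \<in> U"
    then show "f1 e + f2 e \<le> exp ((l * c e)\<^sup>2 * p)"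
      using centered_bernoulli_mgf_le[OF p, of "l * c e"] c by (simp add: f1_def f2_def)
  qed (use p in \<open>simp add: f1_def f2_def\<close>)
  also have "\<dots> = exp (l\<^sup>2 * p * (\<Sum>e\<in>U. (c e)\<^sup>2))"
    by (simp add: exp_sum[OF U, symmetric] sum_distrib_left power_mult_distrib algebra_simps)
  finally show ?thesis .
qed

lemma subset_sum_tail_le:
  fixes c :: "'a \<Rightarrow> real"
  assumes U: "finite U" and p: "0 \<le> p" "p \<le> 1" and l: "0 \<le> l" and c: "\<forall>e\<in>U. \<bar>l * c e\<bar> \<le> 1"
  shows "(\<Sum>S\<in>Pow U. if t < \<bar>(\<Sum>e\<in>S. c e) - p * (\<Sum>e\<in>U. c e)\<bar> then subset_prob p U S else 0)
         \<le> 2 * exp (- (l * t) + l\<^sup>2 * p * (\<Sum>e\<in>U. (c e)\<^sup>2))"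
proof -
  define X where "X S = (\<Sum>e\<in>S. c e) - p * (\<Sum>e\<in>U. c e)" for S
  define w where "w S = subset_prob p U S" for S
  have w0: "0 \<le> w S" for S using p by (simp add: w_def subset_prob_nonneg)
  have markov: "(if t < \<bar>X S\<bar> then w S else 0)
      \<le> exp (- (l * t)) * (w S * exp (l * X S) + w S * exp ((- l) * X S))" for S
  proof (cases "t < \<bar>X S\<bar>")
    case True
    have "0 \<le> l * (X S - t) \<or> 0 \<le> l * (- X S - t)"
      using True l by (cases "X S \<ge> 0") auto
    then have "1 \<le> exp (l * X S - l * t) \<or> 1 \<le> exp ((- l) * X S - l * t)"
      by (simp add: algebra_simps)
    then have "1 \<le> exp (l * X S - l * t) + exp ((- l) * X S - l * t)"
      using exp_gt_zero[of "l * X S - l * t"] exp_gt_zero[of "(- l) * X S - l * t"] by linarith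
    then have "w S \<le> w S * (exp (l * X S - l * t) + exp ((- l) * X S - l * t))"
      using w0[of S] by (simp add: mult_le_cancel_left1)
    then show ?thesis using True by (simp add: exp_diff exp_minus field_simps)
  qed (simp add: w0)
  have "(\<Sum>S\<in>Pow U. if t < \<bar>X S\<bar> then w S else 0)
      \<le> exp (- (l * t)) * ((\<Sum>S\<in>Pow U. w S * exp (l * X S)) + (\<Sum>S\<in>Pow U. w S * exp ((- l) * X S)))"
    using sum_mono[of "Pow U", OF markov] by (simp add: sum_distrib_left sum.distrib distrib_left)
  also have "\<dots> \<le> exp (- (l * t)) * (exp (l\<^sup>2 * p * (\<Sum>e\<in>U. (c e)\<^sup>2)) + exp ((- l)\<^sup>2 * p * (\<Sum>e\<in>U. (c e)\<^sup>2)))"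
    using subset_sum_mgf_le[OF U p c] subset_sum_mgf_le[OF U p, of "- l" c] c
    unfolding w_def X_def by (intro mult_left_mono add_mono) (auto simp: abs_mult)
  also have "\<dots> = 2 * exp (- (l * t) + l\<^sup>2 * p * (\<Sum>e\<in>U. (c e)\<^sup>2))"
    by (simp add: exp_add[symmetric])
  finally show ?thesis unfolding w_def X_def .
qed

section \<open>The random set of observed entries\<close>

lemma finite_upairs: "finite (upairs d)"
  by (rule finite_subset[of _ "{..<d} \<times> {..<d}"]) (auto simp: upairs_def)

lemma card_upairs_le: "card (upairs d) \<le> d * d"
proof -
  have "card (upairs d) \<le> card ({..<d} \<times> {..<d})" by (rule card_mono) (auto simp: upairs_def)
  then show ?thesis by (simp add: card_cartesian_product)
qed

lemma omega_prob_eq: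
  "omega_prob d p E = (\<Sum>S\<in>Pow (upairs d). if E (symcl S) then subset_prob p (upairs d) S else 0)"
  unfolding omega_prob_def subset_prob_def ..

lemma omega_prob_nonneg: "0 \<le> p \<Longrightarrow> p \<le> 1 \<Longrightarrow> 0 \<le> omega_prob d p E"
  unfolding omega_prob_eq by (intro sum_nonneg) (simp add: subset_prob_nonneg)

lemma omega_prob_mono:
  assumes "0 \<le> p" "p \<le> 1" "\<And>\<Omega>. E \<Omega> \<Longrightarrow> F \<Omega>"
  shows "omega_prob d p E \<le> omega_prob d p F"
  unfolding omega_prob_eq using assms subset_prob_nonneg by (intro sum_mono) auto

lemma omega_prob_compl: "omega_prob d p (\<lambda>\<Omega>. \<not> E \<Omega>) = 1 - omega_prob d p E"
proof -
  have "omega_prob d p E + omega_prob d p (\<lambda>\<Omega>. \<not> E \<Omega>) = (\<Sum>S\<in>Pow (upairs d). subset_prob p (upairs d) S)"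
    unfolding omega_prob_eq sum.distrib[symmetric] by (rule sum.cong) auto
  then show ?thesis using sum_subset_prob[OF finite_upairs] by simp
qed

lemma omega_prob_Union_le:
  assumes "finite I" "0 \<le> p" "p \<le> 1"
  shows "omega_prob d p (\<lambda>\<Omega>. \<exists>k\<in>I. B k \<Omega>) \<le> (\<Sum>k\<in>I. omega_prob d p (B k))"
proof -
  have "(if \<exists>k\<in>I. B k (symcl S) then subset_prob p (upairs d) S else 0)
      \<le> (\<Sum>k\<in>I. if B k (symcl S) then subset_prob p (upairs d) S else 0)" for S
  proof (cases "\<exists>k\<in>I. B k (symcl S)")
    case True
    then obtain k where k: "k \<in> I" "B k (symcl S)" by blast
    have "subset_prob p (upairs d) S = (if B k (symcl S) then subset_prob p (upairs d) S else 0)"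
      using k by simp
    also have "\<dots> \<le> (\<Sum>k\<in>I. if B k (symcl S) then subset_prob p (upairs d) S else 0)"
      using assms subset_prob_nonneg[of p "upairs d" S] by (intro member_le_sum k) auto
    finally show ?thesis using True by simp
  qed (use assms subset_prob_nonneg in \<open>auto intro: sum_nonneg\<close>)
  then have "omega_prob d p (\<lambda>\<Omega>. \<exists>k\<in>I. B k \<Omega>)
      \<le> (\<Sum>S\<in>Pow (upairs d). \<Sum>k\<in>I. if B k (symcl S) then subset_prob p (upairs d) S else 0)"
    unfolding omega_prob_eq by (rule sum_mono)
  then show ?thesis unfolding omega_prob_eq by (simp add: sum.swap[of _ I])
qed

section \<open>Concentration of the sampled quadratic form\<close>

lemma sum_symcl:
  fixes H :: "nat \<times> nat \<Rightarrow> real"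
  assumes S: "S \<subseteq> upairs d"
  shows "sum H (symcl S \<inter> ({..<d} \<times> {..<d}))
       = (\<Sum>e\<in>S. H e + (if fst e \<noteq> snd e then H (snd e, fst e) else 0))"
proof -
  define T where "T = {e\<in>S. fst e \<noteq> snd e}"
  define swap :: "nat \<times> nat \<Rightarrow> nat \<times> nat" where "swap e = (snd e, fst e)" for e
  have fS: "finite S" using S finite_upairs finite_subset by blast
  have fT: "finite T" using fS by (simp add: T_def)
  have "symcl S \<inter> ({..<d} \<times> {..<d}) = S \<union> swap ` T"
    using S by (auto simp: symcl_def upairs_def T_def swap_def image_iff)
  moreover have "S \<inter> swap ` T = {}"
  proof (rule ccontr)
    assume "S \<inter> swap ` T \<noteq> {}"
    then obtain a b where "(a, b) \<in> S" "(b, a) \<in> S" "a \<noteq> b" by (auto simp: T_def swap_def)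
    with S have "a \<le> b" "b \<le> a" by (auto simp: upairs_def)
    with \<open>a \<noteq> b\<close> show False by simp
  qed
  ultimately have "sum H (symcl S \<inter> ({..<d} \<times> {..<d})) = sum H S + sum H (swap ` T)"
    using fS fT by (simp add: sum.union_disjoint)
  also have "sum H (swap ` T) = sum (H \<circ> swap) T"
    by (rule sum.reindex) (auto simp: inj_on_def swap_def)
  also have "\<dots> = (\<Sum>e\<in>S. if fst e \<noteq> snd e then H (snd e, fst e) else 0)"
    unfolding T_def swap_def using sum.inter_filter[OF fS] by simp
  finally show ?thesis by (simp add: sum.distrib)
qed

definition sampled_form :: "nat \<Rightarrow> (nat \<times> nat) set \<Rightarrow> (nat \<Rightarrow> real) \<Rightarrow> real" where
  "sampled_form d \<Omega> w = (\<Sum>(i, j)\<in>\<Omega> \<inter> ({..<d} \<times> {..<d}). w i * w j)"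

text \<open>The contribution of an unordered pair to a sum over its symmetric closure.\<close>

definition upair_term :: "(nat \<Rightarrow> real) \<Rightarrow> nat \<times> nat \<Rightarrow> real" where
  "upair_term w e = (if fst e = snd e then 1 else 2) * (w (fst e) * w (snd e))"

lemma sampled_form_symcl:
  assumes "S \<subseteq> upairs d"
  shows "sampled_form d (symcl S) w = (\<Sum>e\<in>S. upair_term w e)"
  unfolding sampled_form_def case_prod_unfold sum_symcl[OF assms] upair_term_def
  by (rule sum.cong) auto

lemma square_sum_eq_upairs: "(\<Sum>i<d. w i)\<^sup>2 = (\<Sum>e\<in>upairs d. upair_term w e)"
proof -
  have "symcl (upairs d) \<inter> ({..<d} \<times> {..<d}) = {..<d} \<times> {..<d}"
    by (auto simp: symcl_def upairs_def)
  then have "sampled_form d (symcl (upairs d)) w = (\<Sum>i<d. w i)\<^sup>2"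
    by (simp add: sampled_form_def power2_eq_square sum_product sum.cartesian_product)
  then show ?thesis using sampled_form_symcl[of "upairs d" d w] by simp
qed

lemma abs_upair_term_le:
  assumes "e \<in> upairs d" "\<forall>i<d. \<bar>w i\<bar> \<le> a"
  shows "\<bar>upair_term w e\<bar> \<le> 2 * a\<^sup>2"
proof -
  have "\<bar>w (fst e) * w (snd e)\<bar> \<le> a * a"
    using assms unfolding abs_mult by (intro mult_mono) (auto simp: upairs_def)
  moreover have "\<bar>upair_term w e\<bar> \<le> 2 * \<bar>w (fst e) * w (snd e)\<bar>"
    by (simp add: upair_term_def abs_mult)
  ultimately show ?thesis by (simp add: power2_eq_square)
qed

lemma prob_sampled_form_deviates_le:
  assumes p: "0 \<le> p" "p \<le> 1" and d: "0 < d" and K: "1 \<le> K" and \<eta>: "0 < \<eta>" "\<eta> \<le> 1"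
    and w: "\<forall>i<d. \<bar>w i\<bar> \<le> K / real d"
  shows "omega_prob d p (\<lambda>\<Omega>. \<eta> * p / 2 < \<bar>sampled_form d \<Omega> w - p * (\<Sum>i<d. w i)\<^sup>2\<bar>)
     \<le> 2 * exp (- (\<eta>\<^sup>2 * p * (real d)\<^sup>2 / (64 * K ^ 4)))"
proof -
  define U where "U = upairs d"
  define b where "b = 2 * (K / real d)\<^sup>2"
  define l where "l = \<eta> * (real d)\<^sup>2 / (16 * K ^ 4)"
  have c: "\<bar>upair_term w e\<bar> \<le> b" if "e \<in> U" for e
    using abs_upair_term_le[OF _ w] that by (simp add: U_def b_def)
  have l0: "0 \<le> l" using \<eta> K by (simp add: l_def)
  have "l * b = \<eta> / (8 * K\<^sup>2)"
    using d K by (simp add: l_def b_def power2_eq_square power4_eq_xxxx field_simps)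
  also have "\<dots> \<le> 1" using \<eta> one_le_power[OF K, of 2] by (simp add: divide_le_eq)
  finally have lb: "l * b \<le> 1" .
  have lc: "\<forall>e\<in>U. \<bar>l * upair_term w e\<bar> \<le> 1"
    using c l0 lb by (auto simp: abs_mult intro: order_trans[OF mult_left_mono])
  have sq: "(\<Sum>e\<in>U. (upair_term w e)\<^sup>2) \<le> real (d * d) * b\<^sup>2"
  proof -
    have "(\<Sum>e\<in>U. (upair_term w e)\<^sup>2) \<le> (\<Sum>e\<in>U. b\<^sup>2)"
      using c by (intro sum_mono) (metis abs_ge_zero order_trans power2_abs power_mono)
    also have "\<dots> \<le> real (d * d) * b\<^sup>2"
      using card_upairs_le[of d] unfolding U_def
      by (simp del: of_nat_mult add: mult_right_mono of_nat_mult[symmetric])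
    finally show ?thesis .
  qed
  have "omega_prob d p (\<lambda>\<Omega>. \<eta> * p / 2 < \<bar>sampled_form d \<Omega> w - p * (\<Sum>i<d. w i)\<^sup>2\<bar>)
      = (\<Sum>S\<in>Pow U. if \<eta> * p / 2 < \<bar>(\<Sum>e\<in>S. upair_term w e) - p * (\<Sum>e\<in>U. upair_term w e)\<bar>
           then subset_prob p U S else 0)"
    unfolding omega_prob_eq U_def square_sum_eq_upairs
    by (intro sum.cong refl) (simp add: sampled_form_symcl)
  also have "\<dots> \<le> 2 * exp (- (l * (\<eta> * p / 2)) + l\<^sup>2 * p * (\<Sum>e\<in>U. (upair_term w e)\<^sup>2))"
    using finite_upairs p l0 lc unfolding U_def by (intro subset_sum_tail_le) auto
  also have "\<dots> \<le> 2 * exp (- (l * (\<eta> * p / 2)) + l\<^sup>2 * p * (real (d * d) * b\<^sup>2))"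
    using sq p by (simp add: mult_left_mono)
  also have "- (l * (\<eta> * p / 2)) + l\<^sup>2 * p * (real (d * d) * b\<^sup>2) = - (\<eta>\<^sup>2 * p * (real d)\<^sup>2 / (64 * K ^ 4))"
    using d K by (simp add: l_def b_def power2_eq_square power4_eq_xxxx field_simps)
  finally show ?thesis .
qed

definition form_concentrated :: "nat \<Rightarrow> (nat \<times> nat) set \<Rightarrow> real \<Rightarrow> real \<Rightarrow> real \<Rightarrow> bool" where
  "form_concentrated d \<Omega> p \<eta> K \<longleftrightarrow> (\<forall>w. (\<forall>i<d. \<bar>w i\<bar> \<le> K / real d) \<longrightarrow>
      \<bar>sampled_form d \<Omega> w - p * (\<Sum>i<d. w i)\<^sup>2\<bar> \<le> \<eta> * p)"

definition grid :: "nat \<Rightarrow> nat \<Rightarrow> int list set" where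
  "grid d N = {ks. set ks \<subseteq> {- int N..int N} \<and> length ks = d}"

definition grid_vec :: "real \<Rightarrow> nat \<Rightarrow> nat \<Rightarrow> int list \<Rightarrow> nat \<Rightarrow> real" where
  "grid_vec K d N ks i = K * of_int (ks ! i) / (real d * real N)"

lemma finite_grid: "finite (grid d N)"
  unfolding grid_def by (rule finite_lists_length_eq) simp

lemma card_grid: "card (grid d N) = (2 * N + 1) ^ d"
proof -
  have "card {- int N..int N} = 2 * N + 1" by simp
  then show ?thesis unfolding grid_def by (simp only: card_lists_length_eq[OF finite_atLeastAtMost_int])
qed

lemma abs_grid_vec_le:
  assumes "ks \<in> grid d N" "i < d" "0 < N" "0 \<le> K"
  shows "\<bar>grid_vec K d N ks i\<bar> \<le> K / real d"
proof -
  have "ks ! i \<in> {- int N..int N}" using assms(1,2) nth_mem[of i ks] by (auto simp: grid_def subset_iff)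
  then have "\<bar>of_int (ks ! i)\<bar> \<le> real N" by (simp add: abs_le_iff)
  then have "K * \<bar>of_int (ks ! i)\<bar> / (real d * real N) \<le> K * real N / (real d * real N)"
    using assms(4) by (intro divide_right_mono mult_left_mono) auto
  then show ?thesis using assms by (simp add: grid_vec_def abs_mult)
qed

lemma grid_rounding:
  assumes d: "0 < d" and N: "0 < N" and K: "0 < K" and w: "\<forall>i<d. \<bar>w i\<bar> \<le> K / real d"
  shows "\<exists>ks\<in>grid d N. \<forall>i<d. \<bar>w i - grid_vec K d N ks i\<bar> \<le> K / (real d * real N)"
proof -
  define h where "h = K / (real d * real N)"
  have h: "0 < h" using d N K by (simp add: h_def)
  define ks where "ks = map (\<lambda>i. \<lfloor>w i / h\<rfloor>) [0..<d]"
  have y: "\<bar>w i / h\<bar> \<le> real N" if "i < d" for i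
  proof -
    have "\<bar>w i\<bar> \<le> h * real N" using w that d N by (simp add: h_def)
    then show ?thesis using h by (simp add: abs_divide divide_le_eq mult.commute)
  qed
  have "ks \<in> grid d N"
  proof -
    have "- int N \<le> \<lfloor>w i / h\<rfloor> \<and> \<lfloor>w i / h\<rfloor> \<le> int N" if "i < d" for i
      using y[OF that] unfolding abs_le_iff by (simp add: le_floor_iff floor_le_iff)
    then show ?thesis by (auto simp: grid_def ks_def)
  qed
  moreover have "\<bar>w i - grid_vec K d N ks i\<bar> \<le> h" if "i < d" for i
  proof -
    have "grid_vec K d N ks i = h * of_int \<lfloor>w i / h\<rfloor>"
      using that by (simp add: grid_vec_def ks_def h_def)
    moreover have "w i = h * (w i / h)" using h by simp
    ultimately have "w i - grid_vec K d N ks i = h * (w i / h - of_int \<lfloor>w i / h\<rfloor>)"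
      by (simp add: algebra_simps)
    moreover have "0 \<le> w i / h - of_int \<lfloor>w i / h\<rfloor>" "w i / h - of_int \<lfloor>w i / h\<rfloor> \<le> 1"
      by linarith+
    ultimately show ?thesis using h by (simp add: abs_mult mult_le_cancel_left1)
  qed
  ultimately show ?thesis unfolding h_def by blast
qed

lemma abs_mult_diff_le:
  fixes x y x' y' :: real
  assumes "\<bar>x\<bar> \<le> a" "\<bar>y'\<bar> \<le> a" "\<bar>x - x'\<bar> \<le> h" "\<bar>y - y'\<bar> \<le> h"
  shows "\<bar>x * y - x' * y'\<bar> \<le> 2 * a * h"
proof -
  have "x * y - x' * y' = x * (y - y') + y' * (x - x')" by (simp add: algebra_simps)
  also have "\<bar>\<dots>\<bar> \<le> \<bar>x\<bar> * \<bar>y - y'\<bar> + \<bar>y'\<bar> * \<bar>x - x'\<bar>" by (metis abs_mult abs_triangle_ineq)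
  also have "\<dots> \<le> a * h + a * h" using assms by (intro add_mono mult_mono) auto
  finally show ?thesis by simp
qed

lemma sampled_form_diff_le:
  assumes "\<forall>i<d. \<bar>w i\<bar> \<le> a" "\<forall>i<d. \<bar>g i\<bar> \<le> a" "\<forall>i<d. \<bar>w i - g i\<bar> \<le> h"
  shows "\<bar>sampled_form d \<Omega> w - sampled_form d \<Omega> g\<bar> \<le> real (card (\<Omega> \<inter> ({..<d} \<times> {..<d}))) * (2 * a * h)"
proof -
  have "\<bar>sampled_form d \<Omega> w - sampled_form d \<Omega> g\<bar>
      = \<bar>\<Sum>(i, j)\<in>\<Omega> \<inter> ({..<d} \<times> {..<d}). w i * w j - g i * g j\<bar>"
    by (simp add: sampled_form_def case_prod_unfold sum_subtractf)
  also have "\<dots> \<le> (\<Sum>(i, j)\<in>\<Omega> \<inter> ({..<d} \<times> {..<d}). \<bar>w i * w j - g i * g j\<bar>)"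
    unfolding case_prod_unfold by (rule sum_abs)
  also have "\<dots> \<le> (\<Sum>(i, j)\<in>\<Omega> \<inter> ({..<d} \<times> {..<d}). 2 * a * h)"
    using assms by (intro sum_mono) (auto intro!: abs_mult_diff_le)
  finally show ?thesis by simp
qed

lemma square_sum_eq_sampled_form: "(\<Sum>i<d. w i)\<^sup>2 = sampled_form d UNIV w"
  by (simp add: sampled_form_def power2_eq_square sum_product sum.cartesian_product)

lemma card_observed_le_of_grid:
  assumes d: "0 < d" and N: "0 < N" and p: "0 \<le> p" and K: "1 \<le> K" and \<eta>: "\<eta> \<le> 1"
    and grid: "\<forall>ks\<in>grid d N. \<bar>sampled_form d \<Omega> (grid_vec K d N ks)
                 - p * (\<Sum>i<d. grid_vec K d N ks i)\<^sup>2\<bar> \<le> \<eta> * p / 2"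
  shows "real (card (\<Omega> \<inter> ({..<d} \<times> {..<d}))) * (K / real d)\<^sup>2 \<le> 2 * p * K\<^sup>2"
proof -
  define a where "a = K / real d"
  define C where "C = real (card (\<Omega> \<inter> ({..<d} \<times> {..<d})))"
  define corner where "corner = replicate d (int N)"
  have corner: "corner \<in> grid d N" by (auto simp: corner_def grid_def)
  have corner_a: "grid_vec K d N corner i = a" if "i < d" for i
    using that N by (simp add: corner_def grid_vec_def a_def)
  have "sampled_form d \<Omega> (grid_vec K d N corner) = (\<Sum>e\<in>\<Omega> \<inter> ({..<d} \<times> {..<d}). a * a)"
    unfolding sampled_form_def by (rule sum.cong) (auto simp: corner_a)
  then have "sampled_form d \<Omega> (grid_vec K d N corner) = C * a\<^sup>2"
    by (simp add: C_def power2_eq_square)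
  moreover have "(\<Sum>i<d. grid_vec K d N corner i) = K" using d by (simp add: corner_a a_def)
  ultimately have "C * a\<^sup>2 \<le> p * K\<^sup>2 + \<eta> * p / 2" using abs_le_D1[OF bspec[OF grid corner]] by simp
  moreover have "\<eta> \<le> K\<^sup>2" using \<eta> one_le_power[OF K, of 2] by linarith
  then have "\<eta> * p \<le> K\<^sup>2 * p" using p by (rule mult_right_mono)
  ultimately show ?thesis
    using mult_nonneg_nonneg[OF p zero_le_power2[of K]] by (simp add: C_def a_def mult.commute)
qed

lemma form_concentrated_of_grid:
  assumes d: "0 < d" and p: "0 \<le> p" and K: "1 \<le> K" and \<eta>: "0 < \<eta>" "\<eta> \<le> 1"
    and N: "12 * K\<^sup>2 / \<eta> \<le> real N"
    and grid: "\<forall>ks\<in>grid d N. \<bar>sampled_form d \<Omega> (grid_vec K d N ks)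
                 - p * (\<Sum>i<d. grid_vec K d N ks i)\<^sup>2\<bar> \<le> \<eta> * p / 2"
  shows "form_concentrated d \<Omega> p \<eta> K"
  unfolding form_concentrated_def
proof (intro allI impI)
  fix w assume w: "\<forall>i<d. \<bar>w i\<bar> \<le> K / real d"
  define a where "a = K / real d"
  define h where "h = K / (real d * real N)"
  define C where "C = real (card (\<Omega> \<inter> ({..<d} \<times> {..<d})))"
  have "0 < 12 * K\<^sup>2 / \<eta>" using K \<eta> by simp
  then have N0: "0 < real N" using N by linarith
  have ah: "a * h = a\<^sup>2 / real N" by (simp add: a_def h_def power2_eq_square)
  have C: "C * a\<^sup>2 \<le> 2 * p * K\<^sup>2"
    using card_observed_le_of_grid[OF d _ p K \<eta>(2) grid] N0 by (simp add: C_def a_def)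
  obtain ks where ks: "ks \<in> grid d N" and wg: "\<forall>i<d. \<bar>w i - grid_vec K d N ks i\<bar> \<le> h"
    using grid_rounding[OF d _ _ w] N0 K unfolding h_def by auto
  define g where "g = grid_vec K d N ks"
  have g: "\<forall>i<d. \<bar>g i\<bar> \<le> a" using abs_grid_vec_le[OF ks] N0 K by (simp add: g_def a_def)
  have "\<bar>sampled_form d \<Omega> w - sampled_form d \<Omega> g\<bar> \<le> C * (2 * a * h)"
    using sampled_form_diff_le[of d w a g h \<Omega>] w g wg[folded g_def] by (simp add: C_def a_def)
  also have "\<dots> = 2 * (C * a\<^sup>2) / real N" by (simp add: ah mult.assoc mult.left_commute)
  also have "\<dots> \<le> 4 * p * K\<^sup>2 / real N" using C N0 by (simp add: divide_right_mono)
  finally have form_diff: "\<bar>sampled_form d \<Omega> w - sampled_form d \<Omega> g\<bar> \<le> 4 * p * K\<^sup>2 / real N" .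
  have "\<bar>(\<Sum>i<d. w i)\<^sup>2 - (\<Sum>i<d. g i)\<^sup>2\<bar> \<le> real (d * d) * (2 * a * h)"
    using sampled_form_diff_le[of d w a g h UNIV] w g wg[folded g_def]
    by (simp add: square_sum_eq_sampled_form card_cartesian_product a_def del: of_nat_mult)
  also have "\<dots> = 2 * K\<^sup>2 / real N" using d by (simp add: a_def h_def power2_eq_square)
  finally have "p * \<bar>(\<Sum>i<d. w i)\<^sup>2 - (\<Sum>i<d. g i)\<^sup>2\<bar> \<le> p * (2 * K\<^sup>2 / real N)"
    using p by (rule mult_left_mono)
  also have "\<dots> = 2 * p * K\<^sup>2 / real N" by simp
  finally have sum_diff: "\<bar>p * (\<Sum>i<d. w i)\<^sup>2 - p * (\<Sum>i<d. g i)\<^sup>2\<bar> \<le> 2 * p * K\<^sup>2 / real N"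
    using p by (simp add: abs_mult right_diff_distrib[symmetric])
  have "12 * K\<^sup>2 \<le> \<eta> * real N" using N \<eta> by (simp add: divide_le_eq mult.commute)
  then have "6 * K\<^sup>2 / real N \<le> \<eta> / 2" using N0 by (simp add: divide_le_eq)
  then have "p * (6 * K\<^sup>2 / real N) \<le> p * (\<eta> / 2)" using p by (rule mult_left_mono)
  then have "6 * p * K\<^sup>2 / real N \<le> \<eta> * p / 2" by (simp add: mult.commute)
  moreover have "\<bar>sampled_form d \<Omega> g - p * (\<Sum>i<d. g i)\<^sup>2\<bar> \<le> \<eta> * p / 2"
    using grid ks by (simp add: g_def)
  ultimately show "\<bar>sampled_form d \<Omega> w - p * (\<Sum>i<d. w i)\<^sup>2\<bar> \<le> \<eta> * p"
    using form_diff sum_diff by linarith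
qed

lemma prob_not_form_concentrated_le:
  assumes p: "0 \<le> p" "p \<le> 1" and d: "0 < d" and K: "1 \<le> K" and \<eta>: "0 < \<eta>" "\<eta> \<le> 1"
    and N: "12 * K\<^sup>2 / \<eta> \<le> real N"
  shows "omega_prob d p (\<lambda>\<Omega>. \<not> form_concentrated d \<Omega> p \<eta> K)
     \<le> real ((2 * N + 1) ^ d) * (2 * exp (- (\<eta>\<^sup>2 * p * (real d)\<^sup>2 / (64 * K ^ 4))))"
proof -
  define bad where "bad ks \<Omega> \<longleftrightarrow>
    \<eta> * p / 2 < \<bar>sampled_form d \<Omega> (grid_vec K d N ks) - p * (\<Sum>i<d. grid_vec K d N ks i)\<^sup>2\<bar>" for ks \<Omega>
  have "0 < 12 * K\<^sup>2 / \<eta>" using K \<eta> by simp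
  then have N0: "0 < N" using N by linarith
  have "omega_prob d p (\<lambda>\<Omega>. \<not> form_concentrated d \<Omega> p \<eta> K)
      \<le> omega_prob d p (\<lambda>\<Omega>. \<exists>ks\<in>grid d N. bad ks \<Omega>)"
    using form_concentrated_of_grid[OF d p(1) K \<eta> N]
    by (intro omega_prob_mono p) (force simp: bad_def)
  also have "\<dots> \<le> (\<Sum>ks\<in>grid d N. omega_prob d p (bad ks))"
    by (rule omega_prob_Union_le[OF finite_grid p])
  also have "\<dots> \<le> (\<Sum>ks\<in>grid d N. 2 * exp (- (\<eta>\<^sup>2 * p * (real d)\<^sup>2 / (64 * K ^ 4))))"
    unfolding bad_def using abs_grid_vec_le N0 K
    by (intro sum_mono prob_sampled_form_deviates_le[OF p d K \<eta>]) auto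
  finally show ?thesis by (simp add: card_grid)
qed

section \<open>Local minima of the completion objective\<close>

text \<open>The coefficients of t and t^2 in mc_obj (x + t v): the directional derivative and half the
  second directional derivative.\<close>

definition mc_grad :: "nat \<Rightarrow> (nat \<times> nat) set \<Rightarrow> (nat \<Rightarrow> real) \<Rightarrow> (nat \<Rightarrow> real) \<Rightarrow> (nat \<Rightarrow> real) \<Rightarrow> real" where
  "mc_grad d \<Omega> z x v =
     (\<Sum>(i, j)\<in>\<Omega> \<inter> ({..<d} \<times> {..<d}). - ((z i * z j - x i * x j) * (x i * v j + v i * x j)))"

definition mc_curv :: "nat \<Rightarrow> (nat \<times> nat) set \<Rightarrow> (nat \<Rightarrow> real) \<Rightarrow> (nat \<Rightarrow> real) \<Rightarrow> (nat \<Rightarrow> real) \<Rightarrow> real" where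
  "mc_curv d \<Omega> z x v =
     (\<Sum>(i, j)\<in>\<Omega> \<inter> ({..<d} \<times> {..<d}). (x i * v j + v i * x j)\<^sup>2 / 2 - (z i * z j - x i * x j) * (v i * v j))"

lemma mc_obj_along_line:
  "\<exists>a3 a4. \<forall>t. mc_obj d \<Omega> z (\<lambda>i. x i + t * v i)
     = mc_obj d \<Omega> z x + mc_grad d \<Omega> z x v * t + mc_curv d \<Omega> z x v * t\<^sup>2 + a3 * t ^ 3 + a4 * t ^ 4"
proof (intro exI allI)
  fix t :: real
  define Obs where "Obs = \<Omega> \<inter> ({..<d} \<times> {..<d})"
  define c0 where "c0 = (\<lambda>(i, j). (z i * z j - x i * x j)\<^sup>2 / 2)"
  define c1 where "c1 = (\<lambda>(i, j). - ((z i * z j - x i * x j) * (x i * v j + v i * x j)))"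
  define c2 where "c2 = (\<lambda>(i, j). (x i * v j + v i * x j)\<^sup>2 / 2 - (z i * z j - x i * x j) * (v i * v j))"
  define c3 where "c3 = (\<lambda>(i, j). (x i * v j + v i * x j) * (v i * v j))"
  define c4 where "c4 = (\<lambda>(i, j). (v i * v j)\<^sup>2 / 2)"
  have obj: "mc_obj d \<Omega> z y = (\<Sum>(i, j)\<in>Obs. (z i * z j - y i * y j)\<^sup>2 / 2)" for y
    by (simp add: mc_obj_def Obs_def sum_distrib_left case_prod_unfold)
  have "(\<lambda>(i, j). (z i * z j - (x i + t * v i) * (x j + t * v j))\<^sup>2 / 2) e
      = c0 e + c1 e * t + c2 e * t\<^sup>2 + c3 e * t ^ 3 + c4 e * t ^ 4" for e
    by (cases e) (simp add: c0_def c1_def c2_def c3_def c4_def power2_eq_square power3_eq_cube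
                    power4_eq_xxxx field_simps)
  then have "mc_obj d \<Omega> z (\<lambda>i. x i + t * v i)
      = sum c0 Obs + sum c1 Obs * t + sum c2 Obs * t\<^sup>2 + sum c3 Obs * t ^ 3 + sum c4 Obs * t ^ 4"
    by (simp add: obj sum.distrib sum_distrib_right)
  moreover have "sum c0 Obs = mc_obj d \<Omega> z x" by (simp add: obj c0_def)
  moreover have "sum c1 Obs = mc_grad d \<Omega> z x v" by (simp add: mc_grad_def Obs_def c1_def)
  moreover have "sum c2 Obs = mc_curv d \<Omega> z x v" by (simp add: mc_curv_def Obs_def c2_def)
  ultimately show "mc_obj d \<Omega> z (\<lambda>i. x i + t * v i) = mc_obj d \<Omega> z x + mc_grad d \<Omega> z x v * t
      + mc_curv d \<Omega> z x v * t\<^sup>2 + sum c3 Obs * t ^ 3 + sum c4 Obs * t ^ 4"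
    by simp
qed

lemma quartic_nonneg_near_zero:
  fixes a1 a2 a3 a4 r :: real
  assumes r: "0 < r" and nonneg: "\<forall>t. \<bar>t\<bar> < r \<longrightarrow> 0 \<le> a1 * t + a2 * t\<^sup>2 + a3 * t ^ 3 + a4 * t ^ 4"
  shows "a1 = 0 \<and> 0 \<le> a2"
proof -
  define g where "g t = a1 + a2 * t + a3 * t\<^sup>2 + a4 * t ^ 3" for t
  define h where "h t = a2 + a3 * t + a4 * t\<^sup>2" for t
  have g: "a1 * t + a2 * t\<^sup>2 + a3 * t ^ 3 + a4 * t ^ 4 = t * g t" for t
    by (simp add: g_def power2_eq_square power3_eq_cube power4_eq_xxxx algebra_simps)
  have "(g \<longlongrightarrow> a1) (at 0)" unfolding g_def by (auto intro!: tendsto_eq_intros)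
  then have g_right: "(g \<longlongrightarrow> a1) (at_right 0)" and g_left: "(g \<longlongrightarrow> a1) (at_left 0)"
    by (simp_all add: filterlim_at_split)
  have "eventually (\<lambda>t. 0 \<le> g t) (at_right 0)"
    unfolding eventually_at_right_field
  proof (intro exI[of _ r] conjI r allI impI)
    fix t :: real assume "0 < t" "t < r"
    then have "0 \<le> t * g t" using nonneg[rule_format, of t] g[of t] by simp
    with \<open>0 < t\<close> show "0 \<le> g t" by (simp add: zero_le_mult_iff)
  qed
  then have "0 \<le> a1" using g_right by (intro tendsto_lowerbound) auto
  moreover have "eventually (\<lambda>t. g t \<le> 0) (at_left 0)"
    unfolding eventually_at_left_field
  proof (intro exI[of _ "- r"] conjI allI impI)
    fix t :: real assume "- r < t" "t < 0"
    then have "0 \<le> t * g t" using nonneg[rule_format, of t] g[of t] by simp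
    with \<open>t < 0\<close> show "g t \<le> 0" by (simp add: zero_le_mult_iff)
  qed (use r in simp)
  then have "a1 \<le> 0" using g_left by (intro tendsto_upperbound) auto
  ultimately have a1: "a1 = 0" by simp
  have "(h \<longlongrightarrow> a2) (at_right 0)" unfolding h_def by (auto intro!: tendsto_eq_intros)
  moreover have "eventually (\<lambda>t. 0 \<le> h t) (at_right 0)"
    unfolding eventually_at_right_field
  proof (intro exI[of _ r] conjI r allI impI)
    fix t :: real assume "0 < t" "t < r"
    moreover have "t * g t = t\<^sup>2 * h t"
      using a1 by (simp add: g_def h_def power2_eq_square power3_eq_cube algebra_simps)
    ultimately have "0 \<le> t\<^sup>2 * h t" using nonneg[rule_format, of t] g[of t] by simp
    with \<open>0 < t\<close> show "0 \<le> h t" by (simp add: zero_le_mult_iff)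
  qed
  ultimately have "0 \<le> a2" by (intro tendsto_lowerbound) auto
  with a1 show ?thesis ..
qed

lemma local_min_d_imp_mc_grad_curv:
  assumes "local_min_d d (mc_obj d \<Omega> z) x"
  shows "mc_grad d \<Omega> z x v = 0 \<and> 0 \<le> mc_curv d \<Omega> z x v"
proof -
  obtain r where r: "0 < r" and min: "\<And>y. l2norm d (\<lambda>i. x i - y i) < r \<Longrightarrow> mc_obj d \<Omega> z x \<le> mc_obj d \<Omega> z y"
    using assms unfolding local_min_d_def by blast
  obtain a3 a4 where line: "\<And>t. mc_obj d \<Omega> z (\<lambda>i. x i + t * v i)
     = mc_obj d \<Omega> z x + mc_grad d \<Omega> z x v * t + mc_curv d \<Omega> z x v * t\<^sup>2 + a3 * t ^ 3 + a4 * t ^ 4"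
    using mc_obj_along_line by blast
  define L where "L = l2norm d v + 1"
  have L: "1 \<le> L" by (simp add: L_def l2norm_def sum_nonneg)
  have dist: "l2norm d (\<lambda>i. x i - (x i + t * v i)) = \<bar>t\<bar> * l2norm d v" for t
    by (simp add: l2norm_def power_mult_distrib sum_distrib_left[symmetric] real_sqrt_mult)
  have "0 < r / L" using r L by simp
  moreover have "\<forall>t. \<bar>t\<bar> < r / L \<longrightarrow>
      0 \<le> mc_grad d \<Omega> z x v * t + mc_curv d \<Omega> z x v * t\<^sup>2 + a3 * t ^ 3 + a4 * t ^ 4"
  proof (intro allI impI)
    fix t :: real assume "\<bar>t\<bar> < r / L"
    then have "\<bar>t\<bar> * L < r" using L by (simp add: pos_less_divide_eq)
    moreover have "\<bar>t\<bar> * l2norm d v \<le> \<bar>t\<bar> * L" by (simp add: L_def mult_left_mono)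
    ultimately have "\<bar>t\<bar> * l2norm d v < r" by linarith
    then show "0 \<le> mc_grad d \<Omega> z x v * t + mc_curv d \<Omega> z x v * t\<^sup>2 + a3 * t ^ 3 + a4 * t ^ 4"
      using min[of "\<lambda>i. x i + t * v i"] dist line by simp
  qed
  ultimately show ?thesis by (rule quartic_nonneg_near_zero)
qed

lemma mc_grad_self:
  "mc_grad d \<Omega> z x x = 2 * sampled_form d \<Omega> (\<lambda>i. x i * x i) - 2 * sampled_form d \<Omega> (\<lambda>i. z i * x i)"
  unfolding mc_grad_def sampled_form_def sum_distrib_left sum_subtractf[symmetric]
  by (intro sum.cong refl) (auto simp: algebra_simps)

lemma mc_grad_target:
  "mc_grad d \<Omega> z x z =
     (sampled_form d \<Omega> (\<lambda>i. x i * x i + z i * x i) - sampled_form d \<Omega> (\<lambda>i. x i * x i - z i * x i)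
      - sampled_form d \<Omega> (\<lambda>i. z i * x i + z i * z i) + sampled_form d \<Omega> (\<lambda>i. z i * x i - z i * z i)) / 2"
  unfolding mc_grad_def sampled_form_def sum_divide_distrib sum_subtractf[symmetric] sum.distrib[symmetric]
  by (intro sum.cong refl) (auto simp: algebra_simps)

lemma mc_curv_target:
  "mc_curv d \<Omega> z x z =
     (sampled_form d \<Omega> (\<lambda>i. x i * x i + z i * z i) - sampled_form d \<Omega> (\<lambda>i. x i * x i - z i * z i)) / 4
      + 2 * sampled_form d \<Omega> (\<lambda>i. z i * x i) - sampled_form d \<Omega> (\<lambda>i. z i * z i)"
  unfolding mc_curv_def sampled_form_def sum_divide_distrib sum_distrib_left sum_subtractf[symmetric]
    sum.distrib[symmetric]
  by (intro sum.cong refl) (auto simp: algebra_simps power2_eq_square)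

lemma form_concentrated_add_le:
  assumes conc: "form_concentrated d \<Omega> p \<eta> K"
    and u: "\<And>i. i < d \<Longrightarrow> \<bar>u i\<bar> \<le> K / (2 * real d)" and v: "\<And>i. i < d \<Longrightarrow> \<bar>v i\<bar> \<le> K / (2 * real d)"
    and c: "\<bar>c\<bar> \<le> 1"
  shows "\<bar>sampled_form d \<Omega> (\<lambda>i. u i + c * v i) - p * ((\<Sum>i<d. u i) + c * (\<Sum>i<d. v i))\<^sup>2\<bar> \<le> \<eta> * p"
proof -
  have "\<bar>u i + c * v i\<bar> \<le> K / real d" if "i < d" for i
  proof -
    have "\<bar>c * v i\<bar> \<le> \<bar>v i\<bar>" using c by (simp add: abs_mult mult_left_le_one_le)
    then show ?thesis using abs_triangle_ineq[of "u i" "c * v i"] u[OF that] v[OF that] by simp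
  qed
  then show ?thesis
    using conc[unfolded form_concentrated_def, rule_format, of "\<lambda>i. u i + c * v i"]
    by (simp add: sum.distrib sum_distrib_left)
qed

lemma form_concentrated_products_le:
  fixes z x :: "nat \<Rightarrow> real"
  assumes conc: "form_concentrated d \<Omega> p \<eta> (8 * \<mu>\<^sup>2)"
    and z: "\<forall>i<d. \<bar>z i\<bar> \<le> \<mu> / sqrt (real d)" and x: "\<forall>i<d. \<bar>x i\<bar> \<le> 2 * \<mu> / sqrt (real d)"
    and u: "u \<in> {\<lambda>i. z i * z i, \<lambda>i. z i * x i, \<lambda>i. x i * x i}"
    and v: "v \<in> {\<lambda>i. z i * z i, \<lambda>i. z i * x i, \<lambda>i. x i * x i}" and c: "\<bar>c\<bar> \<le> 1"
  shows "\<bar>sampled_form d \<Omega> (\<lambda>i. u i + c * v i) - p * ((\<Sum>i<d. u i) + c * (\<Sum>i<d. v i))\<^sup>2\<bar> \<le> \<eta> * p"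
proof -
  define r where "r = \<mu> / sqrt (real d)"
  have "\<bar>w i\<bar> \<le> 4 * r\<^sup>2" if "w \<in> {\<lambda>i. z i * z i, \<lambda>i. z i * x i, \<lambda>i. x i * x i}" "i < d" for w i
  proof -
    have "\<bar>z i\<bar> \<le> r" "\<bar>x i\<bar> \<le> 2 * r" using z x \<open>i < d\<close> by (simp_all add: r_def)
    then have "\<bar>z i * z i\<bar> \<le> r * r" "\<bar>z i * x i\<bar> \<le> r * (2 * r)" "\<bar>x i * x i\<bar> \<le> (2 * r) * (2 * r)"
      unfolding abs_mult by (intro mult_mono'; simp)+
    then show ?thesis using that(1) zero_le_power2[of r] by (auto simp: power2_eq_square)
  qed
  moreover have "4 * r\<^sup>2 = 8 * \<mu>\<^sup>2 / (2 * real d)" by (simp add: r_def power_divide)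
  ultimately show ?thesis using form_concentrated_add_le[OF conc _ _ c] u v by simp
qed

lemma local_min_moment_bounds:
  fixes z x :: "nat \<Rightarrow> real"
  assumes p: "0 < p" and conc: "form_concentrated d \<Omega> p \<eta> (8 * \<mu>\<^sup>2)"
    and z1: "(\<Sum>i<d. (z i)\<^sup>2) = 1" and z: "\<forall>i<d. \<bar>z i\<bar> \<le> \<mu> / sqrt (real d)"
    and x: "\<forall>i<d. \<bar>x i\<bar> \<le> 2 * \<mu> / sqrt (real d)"
    and lm: "local_min_d d (mc_obj d \<Omega> z) x"
  defines "\<alpha> \<equiv> \<Sum>i<d. z i * x i" and "s \<equiv> \<Sum>i<d. x i * x i"
  shows "\<bar>\<alpha>\<^sup>2 - s\<^sup>2\<bar> \<le> 2 * \<eta>" and "\<bar>\<alpha> * (1 - s)\<bar> \<le> \<eta>" and "1 - 4 * \<eta> \<le> s + 2 * \<alpha>\<^sup>2"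
proof -
  let ?Q = "sampled_form d \<Omega>"
  let ?P = "{\<lambda>i. z i * z i, \<lambda>i. z i * x i, \<lambda>i. x i * x i}"
  have dev: "\<bar>?Q (\<lambda>i. u i + c * v i) - p * ((\<Sum>i<d. u i) + c * (\<Sum>i<d. v i))\<^sup>2\<bar> \<le> \<eta> * p"
    if "u \<in> ?P" "v \<in> ?P" "\<bar>c\<bar> \<le> 1" for u v c
    using form_concentrated_products_le[OF conc z x that] .
  have sum_zz: "(\<Sum>i<d. z i * z i) = 1" using z1 by (simp add: power2_eq_square)
  have Qzx: "\<bar>?Q (\<lambda>i. z i * x i) - p * \<alpha>\<^sup>2\<bar> \<le> \<eta> * p"
    using dev[of "\<lambda>i. z i * x i" "\<lambda>i. z i * x i" 0] by (simp add: \<alpha>_def)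
  have Qxx: "\<bar>?Q (\<lambda>i. x i * x i) - p * s\<^sup>2\<bar> \<le> \<eta> * p"
    using dev[of "\<lambda>i. x i * x i" "\<lambda>i. x i * x i" 0] by (simp add: s_def)
  have Qzz: "\<bar>?Q (\<lambda>i. z i * z i) - p\<bar> \<le> \<eta> * p"
    using dev[of "\<lambda>i. z i * z i" "\<lambda>i. z i * z i" 0] by (simp add: sum_zz)
  have Qxx_zx: "\<bar>?Q (\<lambda>i. x i * x i + z i * x i) - p * (s + \<alpha>)\<^sup>2\<bar> \<le> \<eta> * p"
    using dev[of "\<lambda>i. x i * x i" "\<lambda>i. z i * x i" 1] by (simp add: \<alpha>_def s_def)
  have Qxx_zx': "\<bar>?Q (\<lambda>i. x i * x i - z i * x i) - p * (s - \<alpha>)\<^sup>2\<bar> \<le> \<eta> * p"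
    using dev[of "\<lambda>i. x i * x i" "\<lambda>i. z i * x i" "- 1"] by (simp add: \<alpha>_def s_def)
  have Qzx_zz: "\<bar>?Q (\<lambda>i. z i * x i + z i * z i) - p * (\<alpha> + 1)\<^sup>2\<bar> \<le> \<eta> * p"
    using dev[of "\<lambda>i. z i * x i" "\<lambda>i. z i * z i" 1] by (simp add: \<alpha>_def sum_zz)
  have Qzx_zz': "\<bar>?Q (\<lambda>i. z i * x i - z i * z i) - p * (\<alpha> - 1)\<^sup>2\<bar> \<le> \<eta> * p"
    using dev[of "\<lambda>i. z i * x i" "\<lambda>i. z i * z i" "- 1"] by (simp add: \<alpha>_def sum_zz)
  have Qxx_zz: "\<bar>?Q (\<lambda>i. x i * x i + z i * z i) - p * (s + 1)\<^sup>2\<bar> \<le> \<eta> * p"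
    using dev[of "\<lambda>i. x i * x i" "\<lambda>i. z i * z i" 1] by (simp add: s_def sum_zz)
  have Qxx_zz': "\<bar>?Q (\<lambda>i. x i * x i - z i * z i) - p * (s - 1)\<^sup>2\<bar> \<le> \<eta> * p"
    using dev[of "\<lambda>i. x i * x i" "\<lambda>i. z i * z i" "- 1"] by (simp add: s_def sum_zz)
  have grad_x: "mc_grad d \<Omega> z x x = 0" and grad_z: "mc_grad d \<Omega> z x z = 0"
    and curv_z: "0 \<le> mc_curv d \<Omega> z x z"
    using local_min_d_imp_mc_grad_curv[OF lm] by auto
  have "2 * (p * s\<^sup>2) - 2 * (p * \<alpha>\<^sup>2) = - 2 * (p * (\<alpha>\<^sup>2 - s\<^sup>2))"
    by (simp add: algebra_simps)
  then have "\<bar>p * (\<alpha>\<^sup>2 - s\<^sup>2)\<bar> \<le> p * (2 * \<eta>)"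
    using grad_x Qzx Qxx unfolding mc_grad_self abs_le_iff by argo
  then show "\<bar>\<alpha>\<^sup>2 - s\<^sup>2\<bar> \<le> 2 * \<eta>" using p by (simp add: abs_mult)
  have "(p * (s + \<alpha>)\<^sup>2 - p * (s - \<alpha>)\<^sup>2 - p * (\<alpha> + 1)\<^sup>2 + p * (\<alpha> - 1)\<^sup>2) / 2
      = - 2 * (p * (\<alpha> * (1 - s)))"
    by (simp add: power2_eq_square field_simps)
  then have "\<bar>p * (\<alpha> * (1 - s))\<bar> \<le> p * \<eta>"
    using grad_z Qxx_zx Qxx_zx' Qzx_zz Qzx_zz' unfolding mc_grad_target abs_le_iff by argo
  then show "\<bar>\<alpha> * (1 - s)\<bar> \<le> \<eta>" using p by (simp add: abs_mult)
  have "(p * (s + 1)\<^sup>2 - p * (s - 1)\<^sup>2) / 4 + 2 * (p * \<alpha>\<^sup>2) - p = p * (s + 2 * \<alpha>\<^sup>2) - p"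
    by (simp add: power2_eq_square algebra_simps)
  then have "p * (1 - 4 * \<eta>) \<le> p * (s + 2 * \<alpha>\<^sup>2)"
    using curv_z Qxx_zz Qxx_zz' Qzx Qzz unfolding mc_curv_target abs_le_iff by argo
  then show "1 - 4 * \<eta> \<le> s + 2 * \<alpha>\<^sup>2" using p by simp
qed

lemma moment_bounds_imp_sq_dist_le:
  fixes \<eta> s \<alpha> :: real
  assumes \<eta>: "\<eta> \<le> 1/100" and s0: "0 \<le> s"
    and h1: "\<bar>\<alpha>\<^sup>2 - s\<^sup>2\<bar> \<le> 2 * \<eta>" and h2: "\<bar>\<alpha> * (1 - s)\<bar> \<le> \<eta>" and h3: "1 - 4 * \<eta> \<le> s + 2 * \<alpha>\<^sup>2"
  shows "s + 1 - 2 * \<bar>\<alpha>\<bar> \<le> 20 * \<eta>"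
proof -
  define a where "a = \<bar>\<alpha>\<bar>"
  have a0: "0 \<le> a" and aa: "a\<^sup>2 = \<alpha>\<^sup>2" by (simp_all add: a_def)
  have s4: "1/4 < s"
  proof (rule ccontr)
    assume "\<not> 1/4 < s"
    then have "s * s \<le> 1/4 * (1/4)" using s0 by (intro mult_mono) auto
    then have "\<alpha>\<^sup>2 \<le> 1/16 + 2 * \<eta>" using h1 by (simp add: power2_eq_square abs_le_iff)
    then show False using h3 \<eta> \<open>\<not> 1/4 < s\<close> by linarith
  qed
  have "1/4 * (1/4) < s * s" using s4 by (intro mult_strict_mono) auto
  then have "1/5 * (1/5) < a * a" using h1 \<eta> aa by (simp add: power2_eq_square abs_le_iff)
  then have a5: "1/5 < a"
    using a0 mult_mono[of a "1/5" a "1/5"] by (cases "1/5 < a") auto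
  have "1/5 * \<bar>1 - s\<bar> \<le> a * \<bar>1 - s\<bar>" using a5 by (intro mult_right_mono) auto
  also have "\<dots> \<le> \<eta>" using h2 by (simp add: a_def abs_mult)
  finally have d1: "\<bar>1 - s\<bar> \<le> 5 * \<eta>" by simp
  have factor: "(s - a) * (s + a) = s\<^sup>2 - \<alpha>\<^sup>2" using aa by (simp add: power2_eq_square algebra_simps)
  have "\<bar>s - a\<bar> * (2/5) \<le> \<bar>s - a\<bar> * (s + a)" using s4 a5 by (intro mult_left_mono) auto
  also have "\<dots> = \<bar>(s - a) * (s + a)\<bar>" using s0 a0 by (simp add: abs_mult)
  also have "\<dots> = \<bar>s\<^sup>2 - \<alpha>\<^sup>2\<bar>" by (simp only: factor)
  also have "\<dots> \<le> 2 * \<eta>" using h1 by (simp add: abs_minus_commute)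
  finally have d2: "\<bar>s - a\<bar> \<le> 5 * \<eta>" by simp
  show ?thesis using d1 d2 unfolding a_def[symmetric] by linarith
qed

lemma min_l2norm_diff_add:
  assumes "(\<Sum>i<d. (z i)\<^sup>2) = 1"
  shows "min (l2norm d (\<lambda>i. x i - z i)) (l2norm d (\<lambda>i. x i + z i))
       = sqrt ((\<Sum>i<d. x i * x i) + 1 - 2 * \<bar>\<Sum>i<d. z i * x i\<bar>)"
proof -
  have "(x i + c * z i)\<^sup>2 = x i * x i + c\<^sup>2 * (z i)\<^sup>2 + 2 * c * (z i * x i)" for c i
    by (simp add: power2_eq_square algebra_simps)
  then have sq: "(\<Sum>i<d. (x i + c * z i)\<^sup>2) = (\<Sum>i<d. x i * x i) + c\<^sup>2 + 2 * c * (\<Sum>i<d. z i * x i)" for c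
    using assms by (simp add: sum.distrib sum_distrib_left[symmetric])
  have "l2norm d (\<lambda>i. x i - z i) = sqrt ((\<Sum>i<d. x i * x i) + 1 - 2 * (\<Sum>i<d. z i * x i))"
    using sq[of "- 1"] by (simp add: l2norm_def)
  moreover have "l2norm d (\<lambda>i. x i + z i) = sqrt ((\<Sum>i<d. x i * x i) + 1 + 2 * (\<Sum>i<d. z i * x i))"
    using sq[of 1] by (simp add: l2norm_def)
  ultimately show ?thesis by (simp add: min_def abs_if)
qed

lemma local_min_near_target:
  fixes z x :: "nat \<Rightarrow> real"
  assumes p: "0 < p" and \<eta>: "\<eta> \<le> 1/100" and conc: "form_concentrated d \<Omega> p \<eta> (8 * \<mu>\<^sup>2)"
    and z1: "(\<Sum>i<d. (z i)\<^sup>2) = 1" and z: "\<forall>i<d. \<bar>z i\<bar> \<le> \<mu> / sqrt (real d)"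
    and x: "\<forall>i<d. \<bar>x i\<bar> \<le> 2 * \<mu> / sqrt (real d)"
    and lm: "local_min_d d (mc_obj d \<Omega> z) x"
  shows "min (l2norm d (\<lambda>i. x i - z i)) (l2norm d (\<lambda>i. x i + z i)) \<le> sqrt (20 * \<eta>)"
proof -
  have "(\<Sum>i<d. x i * x i) + 1 - 2 * \<bar>\<Sum>i<d. z i * x i\<bar> \<le> 20 * \<eta>"
    using local_min_moment_bounds[OF p conc z1 z x lm]
    by (intro moment_bounds_imp_sq_dist_le \<eta>) (simp_all add: sum_nonneg)
  then show ?thesis unfolding min_l2norm_diff_add[OF z1] by simp
qed

lemma incoherent_unit_imp_one_le:
  assumes d: "0 < d" and z1: "l2norm d z = 1" and z: "\<forall>i<d. \<bar>z i\<bar> \<le> \<mu> / sqrt (real d)"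
  shows "1 \<le> \<mu>"
proof -
  have "0 \<le> \<mu> / sqrt (real d)" using z d by force
  then have \<mu>0: "0 \<le> \<mu>" using d by (simp add: zero_le_divide_iff)
  have "1 = (\<Sum>i<d. (z i)\<^sup>2)" using z1 by (simp add: l2norm_def)
  also have "\<dots> \<le> (\<Sum>i<d. (\<mu> / sqrt (real d))\<^sup>2)"
    using z by (intro sum_mono) (metis abs_ge_zero lessThan_iff order_trans power2_abs power_mono)
  also have "\<dots> = \<mu>\<^sup>2" using d by (simp add: power_divide)
  finally show ?thesis using \<mu>0 power2_le_imp_le[of 1 \<mu>] by simp
qed

lemma prob_local_minima_near_target_ge:
  assumes \<epsilon>: "0 < \<epsilon>" "\<epsilon> \<le> 1/100" and p: "0 < p" "p \<le> 1" and d: "0 < d"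
    and z1: "l2norm d z = 1" and z: "\<forall>i<d. \<bar>z i\<bar> \<le> \<mu> / sqrt (real d)"
    and N: "12 * (8 * \<mu>\<^sup>2)\<^sup>2 / \<epsilon> \<le> real N"
  shows "1 - real ((2 * N + 1) ^ d) * (2 * exp (- (\<epsilon>\<^sup>2 * p * (real d)\<^sup>2 / (64 * (8 * \<mu>\<^sup>2) ^ 4))))
    \<le> omega_prob d p (\<lambda>\<Omega>. \<forall>x. local_min_d d (mc_obj d \<Omega> z) x \<and> (\<forall>i<d. \<bar>x i\<bar> < 2 * \<mu> / sqrt (real d))
          \<longrightarrow> min (l2norm d (\<lambda>i. x i - z i)) (l2norm d (\<lambda>i. x i + z i)) \<le> 5 * sqrt \<epsilon>)"
proof -
  have "1 \<le> \<mu>" by (rule incoherent_unit_imp_one_le[OF d z1 z])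
  then have K: "1 \<le> 8 * \<mu>\<^sup>2" using one_le_power[of \<mu> 2] by linarith
  have z1': "(\<Sum>i<d. (z i)\<^sup>2) = 1" using z1 by (simp add: l2norm_def)
  have "sqrt 20 \<le> sqrt (5\<^sup>2)" by (rule real_sqrt_le_mono) simp
  then have "sqrt 20 * sqrt \<epsilon> \<le> 5 * sqrt \<epsilon>" using \<epsilon> by (intro mult_right_mono) auto
  then have sqrt_le: "sqrt (20 * \<epsilon>) \<le> 5 * sqrt \<epsilon>" by (simp add: real_sqrt_mult)
  have "1 - real ((2 * N + 1) ^ d) * (2 * exp (- (\<epsilon>\<^sup>2 * p * (real d)\<^sup>2 / (64 * (8 * \<mu>\<^sup>2) ^ 4))))
      \<le> 1 - omega_prob d p (\<lambda>\<Omega>. \<not> form_concentrated d \<Omega> p \<epsilon> (8 * \<mu>\<^sup>2))"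
    using prob_not_form_concentrated_le[OF _ p(2) d K \<epsilon>(1) _ N] p \<epsilon> by simp
  also have "\<dots> = omega_prob d p (\<lambda>\<Omega>. form_concentrated d \<Omega> p \<epsilon> (8 * \<mu>\<^sup>2))"
    by (simp add: omega_prob_compl)
  also have "\<dots> \<le> omega_prob d p (\<lambda>\<Omega>. \<forall>x. local_min_d d (mc_obj d \<Omega> z) x \<and> (\<forall>i<d. \<bar>x i\<bar> < 2 * \<mu> / sqrt (real d))
          \<longrightarrow> min (l2norm d (\<lambda>i. x i - z i)) (l2norm d (\<lambda>i. x i + z i)) \<le> 5 * sqrt \<epsilon>)"
  proof (rule omega_prob_mono)
    fix \<Omega> assume conc: "form_concentrated d \<Omega> p \<epsilon> (8 * \<mu>\<^sup>2)"
    show "\<forall>x. local_min_d d (mc_obj d \<Omega> z) x \<and> (\<forall>i<d. \<bar>x i\<bar> < 2 * \<mu> / sqrt (real d))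
          \<longrightarrow> min (l2norm d (\<lambda>i. x i - z i)) (l2norm d (\<lambda>i. x i + z i)) \<le> 5 * sqrt \<epsilon>"
    proof (intro allI impI)
      fix x assume "local_min_d d (mc_obj d \<Omega> z) x \<and> (\<forall>i<d. \<bar>x i\<bar> < 2 * \<mu> / sqrt (real d))"
      then have "min (l2norm d (\<lambda>i. x i - z i)) (l2norm d (\<lambda>i. x i + z i)) \<le> sqrt (20 * \<epsilon>)"
        by (intro local_min_near_target[OF p(1) \<epsilon>(2) conc z1' z]) (auto simp: less_imp_le)
      then show "min (l2norm d (\<lambda>i. x i - z i)) (l2norm d (\<lambda>i. x i + z i)) \<le> 5 * sqrt \<epsilon>"
        using sqrt_le by linarith
    qed
  qed (use p in auto)
  finally show ?thesis .
qed

lemma is_poly2_monomial: "is_poly2 (\<lambda>a b. c * a ^ m * b ^ n)"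
  unfolding is_poly2_def
proof (intro exI allI)
  fix a b :: real
  have "(\<Sum>j\<le>max m n. (if i = m \<and> j = n then c else 0) * a ^ i * b ^ j)
      = (if i = m then c * a ^ m * b ^ n else 0)" for i
    by (cases "i = m") (simp_all add: if_distrib[of "\<lambda>x. x * _"] cong: if_cong)
  then have "(\<Sum>i\<le>max m n. \<Sum>j\<le>max m n. (if i = m \<and> j = n then c else 0) * a ^ i * b ^ j)
      = c * a ^ m * b ^ n"
    by simp
  then show "c * a ^ m * b ^ n
      = (\<Sum>i\<le>max m n. \<Sum>j\<le>max m n. (\<lambda>i j. if i = m \<and> j = n then c else 0) i j * a ^ i * b ^ j)"
    by simp
qed

lemma const_div_power_self_tendsto_zero: "0 < c \<Longrightarrow> (\<lambda>d::nat. (c / real d) ^ d) \<longlonglongrightarrow> 0"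
  by real_asymp

lemma sample_rate_bounds:
  assumes d: "1 < real d" and K: "0 < K" and \<epsilon>: "0 < \<epsilon>" and p: "0 \<le> p"
    and pP: "64 * K ^ 4 * ln (real d) / (real d * \<epsilon>\<^sup>2) \<le> p"
  shows "0 < p" and "exp (- (\<epsilon>\<^sup>2 * p * (real d)\<^sup>2 / (64 * K ^ 4))) \<le> 1 / real d ^ d"
proof -
  have ln_d: "0 < ln (real d)" using d by simp
  have pd: "64 * K ^ 4 * ln (real d) \<le> p * (real d * \<epsilon>\<^sup>2)"
    using pP d \<epsilon> by (simp add: divide_le_eq)
  moreover have "0 < 64 * K ^ 4 * ln (real d)" using K ln_d by simp
  ultimately have "0 < p * (real d * \<epsilon>\<^sup>2)" by linarith
  then show "0 < p" using p by (simp add: zero_less_mult_iff)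
  have "real d * (64 * K ^ 4 * ln (real d)) \<le> real d * (p * (real d * \<epsilon>\<^sup>2))"
    using pd by (simp add: mult_left_mono)
  then have "real d * ln (real d) \<le> \<epsilon>\<^sup>2 * p * (real d)\<^sup>2 / (64 * K ^ 4)"
    using K by (simp add: le_divide_eq power2_eq_square algebra_simps)
  then have "exp (- (\<epsilon>\<^sup>2 * p * (real d)\<^sup>2 / (64 * K ^ 4))) \<le> exp (- (real d * ln (real d)))"
    by simp
  also have "\<dots> = 1 / exp (ln (real d)) ^ d" by (simp add: exp_minus exp_of_nat_mult divide_inverse)
  also have "\<dots> = 1 / real d ^ d" using d by simp
  finally show "exp (- (\<epsilon>\<^sup>2 * p * (real d)\<^sup>2 / (64 * K ^ 4))) \<le> 1 / real d ^ d" .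
qed

lemma recovery_probability_bound:
  assumes \<epsilon>: "0 < \<epsilon>" "\<epsilon> \<le> 1/100"
  shows "\<exists>\<delta>::nat \<Rightarrow> real. \<delta> \<longlonglongrightarrow> 0 \<and>
      (\<forall>(d::nat) (p::real) (z::nat \<Rightarrow> real).
         0 < d \<and> 0 \<le> p \<and> p \<le> 1 \<and>
         p \<ge> 262144 * \<mu> ^ 8 * ln (real d) / (real d * \<epsilon>\<^sup>2) \<and>
         l2norm d z = 1 \<and> (\<forall>i<d. \<bar>z i\<bar> \<le> \<mu> / sqrt (real d)) \<longrightarrow>
         omega_prob d p (\<lambda>\<Omega>. \<forall>x.
             local_min_d d (mc_obj d \<Omega> z) x \<and>
             (\<forall>i<d. \<bar>x i\<bar> < 2 * \<mu> / sqrt (real d)) \<longrightarrow>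
             min (l2norm d (\<lambda>i. x i - z i)) (l2norm d (\<lambda>i. x i + z i)) \<le> 5 * sqrt \<epsilon>)
         \<ge> 1 - \<delta> d)"
proof -
  define K where "K = 8 * \<mu>\<^sup>2"
  define N where "N = nat \<lceil>12 * K\<^sup>2 / \<epsilon>\<rceil>"
  define c where "c = real (2 * N + 1)"
  define \<delta> where "\<delta> d = 2 * (c / real d) ^ d" for d :: nat
  have c: "1 \<le> c" by (simp add: c_def)
  have N: "12 * K\<^sup>2 / \<epsilon> \<le> real N" unfolding N_def by (rule real_nat_ceiling_ge)
  have "\<delta> \<longlonglongrightarrow> 0"
    unfolding \<delta>_def using const_div_power_self_tendsto_zero[of c] c by (simp add: tendsto_mult_right_zero)
  moreover have "omega_prob d p (\<lambda>\<Omega>. \<forall>x. local_min_d d (mc_obj d \<Omega> z) x \<and>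
             (\<forall>i<d. \<bar>x i\<bar> < 2 * \<mu> / sqrt (real d)) \<longrightarrow>
             min (l2norm d (\<lambda>i. x i - z i)) (l2norm d (\<lambda>i. x i + z i)) \<le> 5 * sqrt \<epsilon>) \<ge> 1 - \<delta> d"
    if d: "0 < d" and p: "0 \<le> p" "p \<le> 1" and pP: "262144 * \<mu> ^ 8 * ln (real d) / (real d * \<epsilon>\<^sup>2) \<le> p"
      and z1: "l2norm d z = 1" and z: "\<forall>i<d. \<bar>z i\<bar> \<le> \<mu> / sqrt (real d)" for d p z
  proof (cases "1 \<le> \<delta> d")
    case True
    then show ?thesis using order_trans[OF _ omega_prob_nonneg[OF p]] by simp
  next
    case False
    have "c < real d"
    proof (rule ccontr)
      assume "\<not> c < real d"
      then have "1 \<le> (c / real d) ^ d" using d by (simp add: one_le_power)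
      then show False using False by (simp add: \<delta>_def)
    qed
    then have d1: "1 < real d" using c by linarith
    have K: "0 < K" using incoherent_unit_imp_one_le[OF d z1 z] by (simp add: K_def)
    have "64 * K ^ 4 = 262144 * \<mu> ^ 8" by (simp add: K_def power_mult_distrib power_mult[symmetric])
    then have pP': "64 * K ^ 4 * ln (real d) / (real d * \<epsilon>\<^sup>2) \<le> p" using pP by (simp only:)
    have "c ^ d * (2 * exp (- (\<epsilon>\<^sup>2 * p * (real d)\<^sup>2 / (64 * K ^ 4)))) \<le> c ^ d * (2 * (1 / real d ^ d))"
      using sample_rate_bounds(2)[OF d1 K \<epsilon>(1) p(1) pP'] c by (intro mult_left_mono) auto
    then have "real ((2 * N + 1) ^ d) * (2 * exp (- (\<epsilon>\<^sup>2 * p * (real d)\<^sup>2 / (64 * K ^ 4))))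
        \<le> c ^ d * (2 * (1 / real d ^ d))"
      by (simp only: c_def of_nat_power)
    also have "\<dots> = \<delta> d" by (simp add: \<delta>_def power_divide)
    finally show ?thesis
      using prob_local_minima_near_target_ge[OF \<epsilon> sample_rate_bounds(1)[OF d1 K \<epsilon>(1) p(1) pP'] p(2) d z1 z
          N[unfolded K_def]]
      unfolding K_def by linarith
  qed
  ultimately show ?thesis by blast
qed

theorem theorem4p2:
  shows "\<exists>P. is_poly2 P \<and> (\<exists>c0>0. \<exists>C>0. \<forall>(\<mu>::real) (\<epsilon>::real).
    0 < \<epsilon> \<and> \<epsilon> \<le> c0 \<longrightarrow>
    (\<exists>\<delta>::nat \<Rightarrow> real. \<delta> \<longlonglongrightarrow> 0 \<and>
      (\<forall>(d::nat) (p::real) (z::nat \<Rightarrow> real).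
         0 < d \<and> 0 \<le> p \<and> p \<le> 1 \<and>
         p \<ge> P \<mu> (ln (real d)) / (real d * \<epsilon>\<^sup>2) \<and>
         l2norm d z = 1 \<and> (\<forall>i<d. \<bar>z i\<bar> \<le> \<mu> / sqrt (real d)) \<longrightarrow>
         omega_prob d p (\<lambda>\<Omega>. \<forall>x.
             local_min_d d (mc_obj d \<Omega> z) x \<and>
             (\<forall>i<d. \<bar>x i\<bar> < 2 * \<mu> / sqrt (real d)) \<longrightarrow>
             min (l2norm d (\<lambda>i. x i - z i)) (l2norm d (\<lambda>i. x i + z i)) \<le> C * sqrt \<epsilon>)
         \<ge> 1 - \<delta> d)))"
proof -
  have "\<forall>\<mu> \<epsilon>. 0 < \<epsilon> \<and> \<epsilon> \<le> 1/100 \<longrightarrow> (\<exists>\<delta>. \<delta> \<longlonglongrightarrow> 0 \<and> (\<forall>d p z. 0 < d \<and> 0 \<le> p \<and> p \<le> 1 \<and>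
         p \<ge> 262144 * \<mu> ^ 8 * ln (real d) ^ 1 / (real d * \<epsilon>\<^sup>2) \<and>
         l2norm d z = 1 \<and> (\<forall>i<d. \<bar>z i\<bar> \<le> \<mu> / sqrt (real d)) \<longrightarrow>
         omega_prob d p (\<lambda>\<Omega>. \<forall>x. local_min_d d (mc_obj d \<Omega> z) x \<and> (\<forall>i<d. \<bar>x i\<bar> < 2 * \<mu> / sqrt (real d))
             \<longrightarrow> min (l2norm d (\<lambda>i. x i - z i)) (l2norm d (\<lambda>i. x i + z i)) \<le> 5 * sqrt \<epsilon>)
         \<ge> 1 - \<delta> d))"
    using recovery_probability_bound by simp
  moreover have "is_poly2 (\<lambda>a b. 262144 * a ^ 8 * b ^ 1)" by (rule is_poly2_monomial)
  moreover have "(0::real) < 1/100" "(0::real) < 5" by simp_all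
  ultimately show ?thesis by blast
qed

end
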